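(* Any quadric which vanishes on $W_d$ is a linear combination of elements of $\mathcal{D}$.
   Context: Let $P_d$ be a convex polygon with $d\ge 4$ vertices $v_1,\dots,v_d$ (indices mod $d$) over a field $\mathbb{K}$ with no three edge lines concurrent. With ${\bf v}_i=(v_i,1)$, $\alpha_j=|{\bf v}_{j-1}\,{\bf v}_j\,{\bf v}_{j+1}|$, $\ell_j=|{\bf v}_j\,{\bf v}_{j+1}\,{\bf p}|$, ${\bf p}=(x,y,z)$, $b_i=\alpha_i\prod_{j\ne i-1,i}\ell_j$, the Wachspress surface $W_d\subseteq\mathbb{P}^{d-1}$ is the closure of the image of $p\mapsto(b_1,\dots,b_d)$. In $S=\mathbb{K}[x_1,\ldots,x_d]$, a diagonal monomial is $x_ix_j$ with $j\notin\{i-1,i,i+1\}$, and $\mathcal{D}\subseteq S_2$ is the span of the diagonal monomials. *)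

theory Defs
  imports Main
begin

text \<open>Points of the plane are pairs; homogeneous points are triples.
  Vertices are indexed by 0..d-1 (the paper's v_1..v_d shifted), indices taken mod d.\<close>

definition det3 :: "'a::comm_ring_1 \<times> 'a \<times> 'a \<Rightarrow> 'a \<times> 'a \<times> 'a \<Rightarrow> 'a \<times> 'a \<times> 'a \<Rightarrow> 'a" where
  "det3 u v w = (case u of (u1,u2,u3) \<Rightarrow> case v of (v1,v2,v3) \<Rightarrow> case w of (w1,w2,w3) \<Rightarrow>
      u1*(v2*w3 - v3*w2) - u2*(v1*w3 - v3*w1) + u3*(v1*w2 - v2*w1))"

definition hom :: "'a::comm_ring_1 \<times> 'a \<Rightarrow> 'a \<times> 'a \<times> 'a" where
  "hom p = (fst p, snd p, 1)"

definition vtx :: "nat \<Rightarrow> (nat \<Rightarrow> 'a::comm_ring_1 \<times> 'a) \<Rightarrow> nat \<Rightarrow> 'a \<times> 'a \<times> 'a" where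
  "vtx d v i = hom (v (i mod d))"

text \<open>Strictly convex polygon with vertices in cyclic order: every vertex not on the edge
  v_i v_{i+1} lies strictly on the same side of that edge line, with a uniform orientation.\<close>
definition convex_polygon :: "nat \<Rightarrow> (nat \<Rightarrow> 'a::linordered_field \<times> 'a) \<Rightarrow> bool" where
  "convex_polygon d v \<longleftrightarrow> d \<ge> 3 \<and>
     ((\<forall>i<d. \<forall>k<d. k \<noteq> i \<and> k \<noteq> (i+1) mod d \<longrightarrow> det3 (vtx d v i) (vtx d v (i+1)) (vtx d v k) > 0) \<or>
      (\<forall>i<d. \<forall>k<d. k \<noteq> i \<and> k \<noteq> (i+1) mod d \<longrightarrow> det3 (vtx d v i) (vtx d v (i+1)) (vtx d v k) < 0))"

definition edge_form :: "nat \<Rightarrow> (nat \<Rightarrow> 'a::comm_ring_1 \<times> 'a) \<Rightarrow> nat \<Rightarrow> 'a \<times> 'a \<times> 'a \<Rightarrow> 'a" where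
  "edge_form d v j p = det3 (vtx d v j) (vtx d v (j+1)) p"

definition no_three_concurrent :: "nat \<Rightarrow> (nat \<Rightarrow> 'a::comm_ring_1 \<times> 'a) \<Rightarrow> bool" where
  "no_three_concurrent d v \<longleftrightarrow>
     (\<forall>i<d. \<forall>j<d. \<forall>k<d. \<forall>p. i \<noteq> j \<and> i \<noteq> k \<and> j \<noteq> k \<and> p \<noteq> (0,0,0) \<longrightarrow>
        \<not> (edge_form d v i p = 0 \<and> edge_form d v j p = 0 \<and> edge_form d v k p = 0))"

definition alpha :: "nat \<Rightarrow> (nat \<Rightarrow> 'a::comm_ring_1 \<times> 'a) \<Rightarrow> nat \<Rightarrow> 'a" where
  "alpha d v j = det3 (vtx d v (j + d - 1)) (vtx d v j) (vtx d v (j+1))"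

definition wach :: "nat \<Rightarrow> (nat \<Rightarrow> 'a::comm_ring_1 \<times> 'a) \<Rightarrow> nat \<Rightarrow> 'a \<times> 'a \<times> 'a \<Rightarrow> 'a" where
  "wach d v i p = alpha d v i *
     (\<Prod>j\<in>{0..<d} - {(i + d - 1) mod d, i mod d}. edge_form d v j p)"

text \<open>A quadric in S = K[x_0..x_{d-1}], given by its coefficients q i j on the monomials
  x_i x_j with i \<le> j < d.\<close>
definition quad_eval :: "nat \<Rightarrow> (nat \<Rightarrow> nat \<Rightarrow> 'a::comm_ring_1) \<Rightarrow> (nat \<Rightarrow> 'a) \<Rightarrow> 'a" where
  "quad_eval d q x = (\<Sum>i<d. \<Sum>j\<in>{i..<d}. q i j * x i * x j)"

text \<open>Vanishing on W_d (closure of the image of p \<mapsto> (b_1,...,b_d)); a form vanishes on the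
  Zariski closure of a set iff it vanishes on the set, and the cone over the image is
  the set of all (b_i(p))_i.\<close>
definition vanishes_on_W :: "nat \<Rightarrow> (nat \<Rightarrow> 'a::comm_ring_1 \<times> 'a) \<Rightarrow> (nat \<Rightarrow> nat \<Rightarrow> 'a) \<Rightarrow> bool" where
  "vanishes_on_W d v q \<longleftrightarrow> (\<forall>p. quad_eval d q (\<lambda>i. wach d v i p) = 0)"

definition diagonal_monomial :: "nat \<Rightarrow> nat \<Rightarrow> nat \<Rightarrow> bool" where
  "diagonal_monomial d i j \<longleftrightarrow> j \<noteq> i \<and> j \<noteq> (i+1) mod d \<and> i \<noteq> (j+1) mod d"

definition in_diag_span :: "nat \<Rightarrow> (nat \<Rightarrow> nat \<Rightarrow> 'a::zero) \<Rightarrow> bool" where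
  "in_diag_span d q \<longleftrightarrow> (\<forall>i<d. \<forall>j\<in>{i..<d}. \<not> diagonal_monomial d i j \<longrightarrow> q i j = 0)"

end

theory Submission
  imports Defs "HOL-Library.Product_Plus"
begin

text \<open>Evaluating the Wachspress map at a vertex v_m kills every b_k with k \<noteq> m, since b_k contains
  the factor \<ell>_j of an edge through v_m; strict convexity makes b_m(v_m) \<noteq> 0, so a quadric vanishing
  on W_d has no monomial x_m^2. At the point v_e + v_(e+1) of edge e only \<ell>_e vanishes (every other
  \<ell>_j has constant sign on the vertices), so only b_e and b_(e+1) survive and the monomial
  x_e x_(e+1) is excluded as well. What remains are the diagonal monomials.\<close>

lemma mod_succ_eq_if: "(i::nat) < d \<Longrightarrow> (i + 1) mod d = (if i + 1 = d then 0 else i + 1)"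
  by (cases "i + 1 = d") simp_all

lemma mod_pred_eq_if: "(i::nat) < d \<Longrightarrow> (i + d - 1) mod d = (if i = 0 then d - 1 else i - 1)"
  by (cases i) simp_all

lemma mod_pred_eq_iff_mod_succ:
  "(i::nat) < d \<Longrightarrow> k < d \<Longrightarrow> i = (k + d - 1) mod d \<longleftrightarrow> k = (i + 1) mod d"
  using mod_succ_eq_if[of i d] mod_pred_eq_if[of k d] by auto

lemma mod_succ_neq: "2 \<le> d \<Longrightarrow> (i::nat) < d \<Longrightarrow> (i + 1) mod d \<noteq> i"
  using mod_succ_eq_if[of i d] by auto

lemma mod_pred_neq_mod_succ: "3 \<le> d \<Longrightarrow> (i::nat) < d \<Longrightarrow> (i + d - 1) mod d \<noteq> (i + 1) mod d"
  using mod_succ_eq_if[of i d] mod_pred_eq_if[of i d] by auto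

lemma vtx_mod [simp]: "vtx d v (k mod d) = vtx d v k"
  by (simp add: vtx_def)

lemma det3_add_right: "det3 u w (p + p') = det3 u w p + det3 u w p'"
  by (cases u; cases w; cases p; cases p') (simp add: det3_def algebra_simps)

lemma edge_form_add: "edge_form d v j (p + p') = edge_form d v j p + edge_form d v j p'"
  by (simp add: edge_form_def det3_add_right)

lemma edge_form_at_endpoints:
  "edge_form d v j (vtx d v j) = 0" "edge_form d v j (vtx d v (j + 1)) = 0"
  by (cases "vtx d v j"; cases "vtx d v (j + 1)"; simp add: edge_form_def det3_def algebra_simps)+

lemma quad_eval_eq_sum_support:
  fixes q :: "nat \<Rightarrow> nat \<Rightarrow> 'a::comm_ring_1"
  assumes "S \<subseteq> {..<d}" and "\<And>i. i < d \<Longrightarrow> i \<notin> S \<Longrightarrow> x i = 0"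
  shows "quad_eval d q x = (\<Sum>i\<in>S. \<Sum>j\<in>S \<inter> {i..<d}. q i j * x i * x j)"
proof -
  have "(\<Sum>j\<in>{i..<d}. q i j * x i * x j) = (\<Sum>j\<in>S \<inter> {i..<d}. q i j * x i * x j)" for i
    using assms(2) by (intro sum.mono_neutral_right) fastforce+
  moreover have "(\<Sum>i<d. \<Sum>j\<in>S \<inter> {i..<d}. q i j * x i * x j) = (\<Sum>i\<in>S. \<Sum>j\<in>S \<inter> {i..<d}. q i j * x i * x j)"
    using assms(1) by (intro sum.mono_neutral_right) (auto simp: assms(2))
  ultimately show ?thesis
    by (simp add: quad_eval_def)
qed

locale oriented_polygon =
  fixes d :: nat and v :: "nat \<Rightarrow> 'a::linordered_field \<times> 'a" and \<sigma> :: 'a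
  assumes three_le: "3 \<le> d"
    and off_edge_pos:
      "\<And>i k. \<lbrakk>i < d; k < d; k \<noteq> i; k \<noteq> (i + 1) mod d\<rbrakk> \<Longrightarrow> 0 < \<sigma> * edge_form d v i (vtx d v k)"

lemma convex_polygon_oriented:
  assumes "convex_polygon d v"
  shows "\<exists>\<sigma>. oriented_polygon d v \<sigma>"
proof -
  have "3 \<le> d" using assms by (simp add: convex_polygon_def)
  from assms consider
      "\<forall>i<d. \<forall>k<d. k \<noteq> i \<and> k \<noteq> (i + 1) mod d \<longrightarrow> 0 < edge_form d v i (vtx d v k)"
    | "\<forall>i<d. \<forall>k<d. k \<noteq> i \<and> k \<noteq> (i + 1) mod d \<longrightarrow> edge_form d v i (vtx d v k) < 0"
    unfolding convex_polygon_def edge_form_def by blast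
  then show ?thesis
  proof cases
    case 1
    then have "oriented_polygon d v 1" using \<open>3 \<le> d\<close> by unfold_locales auto
    then show ?thesis ..
  next
    case 2
    then have "oriented_polygon d v (-1)" using \<open>3 \<le> d\<close> by unfold_locales auto
    then show ?thesis ..
  qed
qed

context oriented_polygon
begin

lemma sigma_ne_zero: "\<sigma> \<noteq> 0"
  using off_edge_pos[of 0 2] three_le by force

lemma edge_form_vtx_eq_zero_iff:
  assumes "j < d"
  shows "edge_form d v j (vtx d v m) = 0 \<longleftrightarrow> m mod d = j \<or> m mod d = (j + 1) mod d"
proof (cases "m mod d = j \<or> m mod d = (j + 1) mod d")
  case True
  then have "vtx d v m = vtx d v j \<or> vtx d v m = vtx d v (j + 1)"
    by (metis vtx_mod)
  then have "edge_form d v j (vtx d v m) = 0"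
    using edge_form_at_endpoints by (elim disjE) simp_all
  with True show ?thesis by simp
next
  case False
  have "m mod d < d" using three_le by simp
  then have "0 < \<sigma> * edge_form d v j (vtx d v m)"
    using off_edge_pos[OF assms, of "m mod d"] False by simp
  then show ?thesis
    using False by auto
qed

lemma edge_form_vtx_nonneg:
  assumes "j < d"
  shows "0 \<le> \<sigma> * edge_form d v j (vtx d v m)"
proof (cases "edge_form d v j (vtx d v m) = 0")
  case False
  have "m mod d < d" using three_le by simp
  then show ?thesis
    using off_edge_pos[OF assms, of "m mod d"] False edge_form_vtx_eq_zero_iff[OF assms, of m]
    by simp
qed simp

lemma alpha_ne_zero:
  assumes "k < d"
  shows "alpha d v k \<noteq> 0"
proof -
  define k' where "k' = (k + d - 1) mod d"
  have k': "k' < d" "(k' + 1) mod d = k" "k \<noteq> (k + 1) mod d" "k' \<noteq> (k + 1) mod d"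
    using assms three_le mod_pred_eq_if[OF assms] mod_succ_eq_if[OF assms]
    by (auto simp: k'_def)
  have "vtx d v (k + d - 1) = vtx d v k'" "vtx d v k = vtx d v (k' + 1)"
    by (metis k'_def vtx_mod, metis k'(2) vtx_mod)
  then have "alpha d v k = edge_form d v k' (vtx d v (k + 1))"
    by (simp only: alpha_def edge_form_def)
  also have "\<dots> \<noteq> 0"
    using k' by (simp add: edge_form_vtx_eq_zero_iff)
  finally show ?thesis .
qed

lemma wach_eq_zero_iff:
  assumes "k < d"
  shows "wach d v k p = 0 \<longleftrightarrow> (\<exists>j<d. j \<noteq> (k + d - 1) mod d \<and> j \<noteq> k \<and> edge_form d v j p = 0)"
  using alpha_ne_zero[OF assms] assms by (auto simp: wach_def)

lemma wach_vtx_eq_zero_iff: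
  assumes "k < d" "m < d"
  shows "wach d v k (vtx d v m) = 0 \<longleftrightarrow> k \<noteq> m"
proof
  assume "wach d v k (vtx d v m) = 0"
  then obtain j where j: "j < d" "j \<noteq> (k + d - 1) mod d" "j \<noteq> k" "m = j \<or> m = (j + 1) mod d"
    using assms by (auto simp: wach_eq_zero_iff edge_form_vtx_eq_zero_iff)
  then show "k \<noteq> m"
    using mod_pred_eq_iff_mod_succ[OF j(1) assms(1)] by auto
next
  assume "k \<noteq> m"
  show "wach d v k (vtx d v m) = 0"
  proof (cases "k = (m + 1) mod d")
    case True
    \<comment> \<open>edge m is not a factor of b_(m+1), so use the edge ending at v_m\<close>
    define j where "j = (m + d - 1) mod d"
    have j: "j < d" "j \<noteq> k"
      using three_le True mod_pred_neq_mod_succ[OF three_le assms(2)] by (simp_all add: j_def)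
    have "m = (j + 1) mod d" "m = (k + d - 1) mod d"
      using mod_pred_eq_iff_mod_succ[OF j(1) assms(2)] mod_pred_eq_iff_mod_succ[OF assms(2,1)] True
      by (simp_all add: j_def)
    moreover have "j \<noteq> m"
      using mod_succ_neq[of d j] three_le j(1) \<open>m = (j + 1) mod d\<close> by auto
    ultimately have "j \<noteq> (k + d - 1) mod d \<and> edge_form d v j (vtx d v m) = 0"
      using j(1) assms(2) by (simp add: edge_form_vtx_eq_zero_iff)
    then show ?thesis
      using j assms(1) wach_eq_zero_iff by blast
  next
    case False
    then have "m \<noteq> (k + d - 1) mod d"
      using assms mod_pred_eq_iff_mod_succ by blast
    then show ?thesis
      using assms \<open>k \<noteq> m\<close> by (auto simp: wach_eq_zero_iff edge_form_vtx_eq_zero_iff)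
  qed
qed

lemma edge_form_edge_point_eq_zero_iff:
  assumes "j < d" "e < d"
  shows "edge_form d v j (vtx d v e + vtx d v (e + 1)) = 0 \<longleftrightarrow> j = e"
proof
  \<comment> \<open>\<sigma> \<ell>_j is nonnegative at every vertex, so it vanishes at v_e + v_(e+1) only if it vanishes at both\<close>
  assume zero: "edge_form d v j (vtx d v e + vtx d v (e + 1)) = 0"
  have "\<sigma> * edge_form d v j (vtx d v e) + \<sigma> * edge_form d v j (vtx d v (e + 1))
      = \<sigma> * edge_form d v j (vtx d v e + vtx d v (e + 1))"
    by (simp add: edge_form_add distrib_left)
  then have "\<sigma> * edge_form d v j (vtx d v e) + \<sigma> * edge_form d v j (vtx d v (e + 1)) = 0"
    by (simp only: zero mult_zero_right)
  then have "\<sigma> * edge_form d v j (vtx d v e) = 0" "\<sigma> * edge_form d v j (vtx d v (e + 1)) = 0"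
    using edge_form_vtx_nonneg[OF assms(1)] by (simp_all add: add_nonneg_eq_0_iff)
  then have "e = j \<or> e = (j + 1) mod d" "(e + 1) mod d = j \<or> (e + 1) mod d = (j + 1) mod d"
    using sigma_ne_zero assms by (simp_all add: edge_form_vtx_eq_zero_iff)
  then show "j = e"
    using assms three_le mod_succ_eq_if[OF assms(1)] mod_succ_eq_if[OF assms(2)]
    by (auto split: if_splits)
qed (use edge_form_at_endpoints[of d v e] in \<open>simp add: edge_form_add\<close>)

lemma wach_edge_point_eq_zero_iff:
  assumes "k < d" "e < d"
  shows "wach d v k (vtx d v e + vtx d v (e + 1)) = 0 \<longleftrightarrow> k \<noteq> e \<and> k \<noteq> (e + 1) mod d"
proof -
  have "wach d v k (vtx d v e + vtx d v (e + 1)) = 0 \<longleftrightarrow> e \<noteq> (k + d - 1) mod d \<and> e \<noteq> k"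
    using assms edge_form_edge_point_eq_zero_iff by (auto simp: wach_eq_zero_iff)
  then show ?thesis
    using mod_pred_eq_iff_mod_succ[OF assms(2,1)] by auto
qed

lemma vanishing_quadric_square_coeff:
  assumes "vanishes_on_W d v q" "m < d"
  shows "q m m = 0"
proof -
  define x where "x = (\<lambda>i. wach d v i (vtx d v m))"
  have "quad_eval d q x = q m m * x m * x m"
    using assms(2) by (subst quad_eval_eq_sum_support[of "{m}"]) (auto simp: x_def wach_vtx_eq_zero_iff)
  moreover have "quad_eval d q x = 0"
    using assms(1) by (simp only: vanishes_on_W_def x_def)
  moreover have "x m \<noteq> 0"
    using assms(2) by (simp add: x_def wach_vtx_eq_zero_iff)
  ultimately show ?thesis by simp
qed

lemma vanishing_quadric_adjacent_coeff:
  assumes "vanishes_on_W d v q" "i < j" "j < d" "j = (i + 1) mod d \<or> i = (j + 1) mod d"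
  shows "q i j = 0"
proof -
  obtain e where e: "e < d" "{i, j} = {e, (e + 1) mod d}"
  proof (cases "j = (i + 1) mod d")
    case True
    then show ?thesis using that[of i] assms(2,3) by simp
  next
    case False
    then show ?thesis using that[of j] assms(3,4) by (simp add: insert_commute)
  qed
  define x where "x = (\<lambda>k. wach d v k (vtx d v e + vtx d v (e + 1)))"
  have support: "x k = 0" if "k < d" "k \<notin> {i, j}" for k
    using that e wach_edge_point_eq_zero_iff[of k e] by (simp add: x_def)
  have "{i, j} \<inter> {i..<d} = {i, j}" "{i, j} \<inter> {j..<d} = {j}"
    using assms(2,3) by auto
  then have "quad_eval d q x = q i i * x i * x i + q i j * x i * x j + q j j * x j * x j"
    using assms(2,3) support by (subst quad_eval_eq_sum_support[of "{i, j}"]) auto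
  moreover have "quad_eval d q x = 0"
    using assms(1) by (simp only: vanishes_on_W_def x_def)
  moreover have "x i \<noteq> 0" "x j \<noteq> 0"
    using assms(2,3) e wach_edge_point_eq_zero_iff[of i e] wach_edge_point_eq_zero_iff[of j e]
    by (auto simp: x_def)
  moreover have "q i i = 0" "q j j = 0"
    using assms vanishing_quadric_square_coeff by auto
  ultimately show ?thesis by simp
qed

end

theorem lemma3p1:
  fixes d :: nat and v :: "nat \<Rightarrow> 'a::linordered_field \<times> 'a" and q :: "nat \<Rightarrow> nat \<Rightarrow> 'a"
  assumes "d \<ge> 4"
    and "convex_polygon d v"
    and "no_three_concurrent d v"
    and "vanishes_on_W d v q"
  shows "in_diag_span d q"
proof -
  obtain \<sigma> where "oriented_polygon d v \<sigma>"
    using convex_polygon_oriented[OF assms(2)] ..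
  then interpret oriented_polygon d v \<sigma> .
  show ?thesis
    unfolding in_diag_span_def
  proof (intro allI impI ballI)
    fix i j
    assume "i < d" "j \<in> {i..<d}" "\<not> diagonal_monomial d i j"
    then consider "j = i" | "i < j" "j < d" "j = (i + 1) mod d \<or> i = (j + 1) mod d"
      unfolding diagonal_monomial_def by force
    then show "q i j = 0"
      using \<open>i < d\<close> assms(4) vanishing_quadric_square_coeff vanishing_quadric_adjacent_coeff
      by cases auto
  qed
qed

end
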